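(* Consider the discrete-time nonlinear system $x^+=AM(x)+Bu$ with (unknown) $A\in\mathbb{R}^{n\times N}$, $B\in\mathbb{R}^{n\times m}$, $M(x)=\begin{bmatrix}x\\ \mathcal{Z}(x)\end{bmatrix}\in\mathbb{R}^N$, $\mathcal{Z}:\mathbb{R}^n\to\mathbb{R}^{N-n}$. Let $\mathcal{U}_0=[u(0),\dots,u(T-1)]$, $\mathcal{X}_1=[x(1),\dots,x(T)]$ and $\mathcal{M}_0=[M(x(0)),\dots,M(x(T-1))]$ be built from a single trajectory $x(t+1)=AM(x(t))+Bu(t)$, with $\mathcal{M}_0$ of full row rank, and let $Q=[Q_1~Q_2]\in\mathbb{R}^{T\times N}$ ($Q_1\in\mathbb{R}^{T\times n}$, $Q_2\in\mathbb{R}^{T\times(N-n)}$) satisfy $\mathcal{M}_0Q=\mathbb{I}_N$. Under the controller $u=\mathcal{U}_0QM(x)$, if the nonlinearity cancellation condition $\mathcal{X}_1Q_2=\mathbf{0}_{n\times(N-n)}$ holds, then for every $k\in\mathbb{N}_{>0}$ the state after $k$ steps of the closed-loop system is $x^{k+}=(\mathcal{X}_1Q_1)^kx$.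
   Context: $\mathbb{I}_N$ is the identity, $\mathbf{0}_{n\times(N-n)}$ the zero matrix; $x^{k+}$ denotes the state reached from $x$ after $k$ iterations of the closed-loop dynamics. *)

theory Defs
  imports "Jordan_Normal_Form.DL_Rank"
begin

definition lift_state :: "(real vec \<Rightarrow> real vec) \<Rightarrow> real vec \<Rightarrow> real vec" where
  "lift_state Z x = x @\<^sub>v Z x"

end

theory Submission
  imports Defs
begin

text \<open>The trajectory gives the data identity \<open>\<X>\<^sub>1 = A \<M>\<^sub>0 + B \<U>\<^sub>0\<close>; multiplying on the
  right by the right inverse \<open>Q\<close> of \<open>\<M>\<^sub>0\<close> yields \<open>A + B \<U>\<^sub>0 Q = \<X>\<^sub>1 Q\<close>, so the closed loop
  \<open>x\<^sup>+ = (A + B \<U>\<^sub>0 Q) M(x)\<close> equals \<open>\<X>\<^sub>1 Q M(x) = \<X>\<^sub>1 Q\<^sub>1 x + \<X>\<^sub>1 Q\<^sub>2 \<Z>(x)\<close>. The cancellation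
  condition removes the nonlinear term, leaving the linear map \<open>x \<mapsto> \<X>\<^sub>1 Q\<^sub>1 x\<close>, whose
  \<open>k\<close>-fold iterate is multiplication by \<open>(\<X>\<^sub>1 Q\<^sub>1)\<^sup>k\<close>.\<close>

lemma lift_state_carrier_vec:
  assumes "n \<le> N" and "x \<in> carrier_vec n" and "Z x \<in> carrier_vec (N - n)"
  shows "lift_state Z x \<in> carrier_vec N"
  using assms append_carrier_vec[of x n "Z x" "N - n"] unfolding lift_state_def by simp

lemma trajectory_carrier_vec:
  assumes A: "A \<in> carrier_mat n N" and B: "B \<in> carrier_mat n m" and nN: "n \<le> N"
    and Z: "\<And>x. x \<in> carrier_vec n \<Longrightarrow> Z x \<in> carrier_vec (N - n)"
    and x0: "xs 0 \<in> carrier_vec n"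
    and us: "\<And>t. t < T \<Longrightarrow> us t \<in> carrier_vec m"
    and traj: "\<And>t. t < T \<Longrightarrow> xs (Suc t) = A *\<^sub>v lift_state Z (xs t) + B *\<^sub>v us t"
    and "t \<le> T"
  shows "xs t \<in> carrier_vec n"
  using \<open>t \<le> T\<close>
proof (induction t)
  case 0
  show ?case using x0 .
next
  case (Suc t)
  then have "lift_state Z (xs t) \<in> carrier_vec N"
    using lift_state_carrier_vec[OF nN] Z by simp
  then show ?case using traj[of t] Suc.prems A B us[of t] by simp
qed

lemma mat_of_cols_mult_add:
  assumes A: "A \<in> carrier_mat n N" and B: "B \<in> carrier_mat n m"
    and a: "\<And>t. t < T \<Longrightarrow> a t \<in> carrier_vec N"
    and b: "\<And>t. t < T \<Longrightarrow> b t \<in> carrier_vec m"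
  shows "mat_of_cols n (map (\<lambda>t. A *\<^sub>v a t + B *\<^sub>v b t) [0..<T])
         = A * mat_of_cols N (map a [0..<T]) + B * mat_of_cols m (map b [0..<T])"
    (is "?X = A * ?M + B * ?U")
proof (rule eq_matI)
  fix i j assume "i < dim_row (A * ?M + B * ?U)" and "j < dim_col (A * ?M + B * ?U)"
  then have i: "i < n" and j: "j < T" using A B by auto
  have "col ?M j = a j" "col ?U j = b j" using j a[OF j] b[OF j] by simp_all
  then show "?X $$ (i, j) = (A * ?M + B * ?U) $$ (i, j)"
    using i j A B by (simp add: mat_of_cols_index)
qed (use A B in auto)

lemma data_based_closed_loop_mat:
  fixes A B M0 U0 Q X1 :: "'a :: semiring_1 mat"
  assumes A: "A \<in> carrier_mat n N" and B: "B \<in> carrier_mat n m"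
    and M0: "M0 \<in> carrier_mat N T" and U0: "U0 \<in> carrier_mat m T" and Q: "Q \<in> carrier_mat T N"
    and data: "X1 = A * M0 + B * U0" and rinv: "M0 * Q = 1\<^sub>m N"
  shows "A + B * (U0 * Q) = X1 * Q"
proof -
  have "X1 * Q = A * M0 * Q + B * U0 * Q"
    unfolding data using A M0 B U0 Q by (intro add_mult_distrib_mat) auto
  also have "A * M0 * Q = A" using assoc_mult_mat[OF A M0 Q] rinv right_mult_one_mat[OF A] by simp
  also have "B * U0 * Q = B * (U0 * Q)" using assoc_mult_mat[OF B U0 Q] .
  finally show ?thesis by simp
qed

lemma mult_mat_vec_append:
  assumes Q: "Q \<in> carrier_mat r N" and nN: "n \<le> N"
    and y: "y \<in> carrier_vec n" and z: "z \<in> carrier_vec (N - n)"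
  shows "Q *\<^sub>v (y @\<^sub>v z)
         = mat r n (\<lambda>(i, j). Q $$ (i, j)) *\<^sub>v y + mat r (N - n) (\<lambda>(i, j). Q $$ (i, n + j)) *\<^sub>v z"
    (is "_ = ?Q1 *\<^sub>v y + ?Q2 *\<^sub>v z")
proof (rule eq_vecI)
  fix i assume "i < dim_vec (?Q1 *\<^sub>v y + ?Q2 *\<^sub>v z)"
  then have i: "i < r" by simp
  have "row Q i = row ?Q1 i @\<^sub>v row ?Q2 i"
    by (rule eq_vecI) (use i Q nN in auto)
  moreover have "row ?Q1 i \<in> carrier_vec n" and "row ?Q2 i \<in> carrier_vec (N - n)"
    using i by simp_all
  ultimately have "row Q i \<bullet> (y @\<^sub>v z) = row ?Q1 i \<bullet> y + row ?Q2 i \<bullet> z"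
    using scalar_prod_append y z by simp
  then show "(Q *\<^sub>v (y @\<^sub>v z)) $ i = (?Q1 *\<^sub>v y + ?Q2 *\<^sub>v z) $ i"
    using i Q by simp
qed (use Q y z nN in auto)

lemma closed_loop_step_linear:
  assumes A: "A \<in> carrier_mat n N" and B: "B \<in> carrier_mat n m" and nN: "n \<le> N"
    and X1: "X1 \<in> carrier_mat n T" and U0: "U0 \<in> carrier_mat m T" and Q: "Q \<in> carrier_mat T N"
    and closed_loop: "A + B * (U0 * Q) = X1 * Q"
    and cancel: "X1 * mat T (N - n) (\<lambda>(i, j). Q $$ (i, n + j)) = 0\<^sub>m n (N - n)"
    and y: "y \<in> carrier_vec n" and Zy: "Z y \<in> carrier_vec (N - n)"
  shows "A *\<^sub>v lift_state Z y + B *\<^sub>v ((U0 * Q) *\<^sub>v lift_state Z y)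
         = (X1 * mat T n (\<lambda>(i, j). Q $$ (i, j))) *\<^sub>v y"
proof -
  define Q1 where "Q1 = mat T n (\<lambda>(i, j). Q $$ (i, j))"
  define Q2 where "Q2 = mat T (N - n) (\<lambda>(i, j). Q $$ (i, n + j))"
  have Q1: "Q1 \<in> carrier_mat T n" and Q2: "Q2 \<in> carrier_mat T (N - n)"
    unfolding Q1_def Q2_def by simp_all
  have lift: "lift_state Z y \<in> carrier_vec N" using nN y Zy by (rule lift_state_carrier_vec)
  have UQ: "U0 * Q \<in> carrier_mat m N" using U0 Q by simp
  have "A *\<^sub>v lift_state Z y + B *\<^sub>v ((U0 * Q) *\<^sub>v lift_state Z y)
        = (A + B * (U0 * Q)) *\<^sub>v lift_state Z y"
    using A B UQ lift by (simp add: add_mult_distrib_mat_vec assoc_mult_mat_vec)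
  also have "\<dots> = X1 *\<^sub>v (Q *\<^sub>v lift_state Z y)"
    unfolding closed_loop using X1 Q lift by (rule assoc_mult_mat_vec)
  also have "Q *\<^sub>v lift_state Z y = Q1 *\<^sub>v y + Q2 *\<^sub>v Z y"
    unfolding lift_state_def Q1_def Q2_def using Q nN y Zy by (rule mult_mat_vec_append)
  also have "X1 *\<^sub>v (Q1 *\<^sub>v y + Q2 *\<^sub>v Z y) = (X1 * Q1) *\<^sub>v y + (X1 * Q2) *\<^sub>v Z y"
    using X1 Q1 Q2 y Zy by (simp add: mult_add_distrib_mat_vec assoc_mult_mat_vec)
  also have "(X1 * Q2) *\<^sub>v Z y = 0\<^sub>v n"
    using cancel Zy unfolding Q2_def by (intro eq_vecI) (auto simp: scalar_prod_def)
  also have "(X1 * Q1) *\<^sub>v y + 0\<^sub>v n = (X1 * Q1) *\<^sub>v y"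
    using X1 Q1 y by simp
  finally show ?thesis unfolding Q1_def .
qed

lemma funpow_linear_eq_pow_mat_mult_vec:
  assumes K: "K \<in> carrier_mat n n"
    and f: "\<And>y. y \<in> carrier_vec n \<Longrightarrow> f y = K *\<^sub>v y"
    and x: "x \<in> carrier_vec n"
  shows "(f ^^ k) x = (K ^\<^sub>m k) *\<^sub>v x"
  using x
proof (induction k arbitrary: x)
  case 0
  then show ?case using K by simp
next
  case (Suc k)
  have "(f ^^ Suc k) x = (f ^^ k) (K *\<^sub>v x)"
    using f Suc.prems by (simp add: funpow_Suc_right del: funpow.simps)
  also have "\<dots> = (K ^\<^sub>m k) *\<^sub>v (K *\<^sub>v x)"
    using Suc.IH K Suc.prems by simp
  also have "\<dots> = (K ^\<^sub>m Suc k) *\<^sub>v x"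
    using assoc_mult_mat_vec[OF pow_carrier_mat[OF K] K Suc.prems] by simp
  finally show ?case .
qed

theorem lemma3:
  fixes n m N T :: nat
    and A B Q :: "real mat"
    and Z :: "real vec \<Rightarrow> real vec"
    and xs us :: "nat \<Rightarrow> real vec"
  assumes nN: "n \<le> N"
    and A: "A \<in> carrier_mat n N"
    and B: "B \<in> carrier_mat n m"
    and Z: "\<And>x. x \<in> carrier_vec n \<Longrightarrow> Z x \<in> carrier_vec (N - n)"
    and x0: "xs 0 \<in> carrier_vec n"
    and us: "\<And>t. t < T \<Longrightarrow> us t \<in> carrier_vec m"
    and traj: "\<And>t. t < T \<Longrightarrow> xs (Suc t) = A *\<^sub>v lift_state Z (xs t) + B *\<^sub>v us t"
    and rank: "vec_space.rank N (mat_of_cols N (map (\<lambda>t. lift_state Z (xs t)) [0..<T])) = N"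
    and Q: "Q \<in> carrier_mat T N"
    and rinv: "mat_of_cols N (map (\<lambda>t. lift_state Z (xs t)) [0..<T]) * Q = 1\<^sub>m N"
    and cancel: "mat_of_cols n (map (\<lambda>t. xs (Suc t)) [0..<T])
                   * mat T (N - n) (\<lambda>(i, j). Q $$ (i, n + j)) = 0\<^sub>m n (N - n)"
  shows "\<forall>x \<in> carrier_vec n. \<forall>k > 0.
           ((\<lambda>y. A *\<^sub>v lift_state Z y
                  + B *\<^sub>v ((mat_of_cols m (map us [0..<T]) * Q) *\<^sub>v lift_state Z y)) ^^ k) x
           = ((mat_of_cols n (map (\<lambda>t. xs (Suc t)) [0..<T]) * mat T n (\<lambda>(i, j). Q $$ (i, j))) ^\<^sub>m k) *\<^sub>v x"
proof -
  let ?M0 = "mat_of_cols N (map (\<lambda>t. lift_state Z (xs t)) [0..<T])"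
  let ?U0 = "mat_of_cols m (map us [0..<T])"
  let ?X1 = "mat_of_cols n (map (\<lambda>t. xs (Suc t)) [0..<T])"
  have lift: "lift_state Z (xs t) \<in> carrier_vec N" if "t < T" for t
    using that trajectory_carrier_vec[OF A B nN Z x0 us traj, of t] Z lift_state_carrier_vec[OF nN]
    by simp
  have "?X1 = mat_of_cols n (map (\<lambda>t. A *\<^sub>v lift_state Z (xs t) + B *\<^sub>v us t) [0..<T])"
    using traj by (intro arg_cong[where f = "mat_of_cols n"] map_cong) auto
  also have "\<dots> = A * ?M0 + B * ?U0"
    using A B lift us by (rule mat_of_cols_mult_add)
  finally have "A + B * (?U0 * Q) = ?X1 * Q"
    using A B Q rinv by (intro data_based_closed_loop_mat) auto
  then have "A *\<^sub>v lift_state Z y + B *\<^sub>v ((?U0 * Q) *\<^sub>v lift_state Z y)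
             = (?X1 * mat T n (\<lambda>(i, j). Q $$ (i, j))) *\<^sub>v y" if "y \<in> carrier_vec n" for y
    using A B nN Q cancel that Z[OF that] by (intro closed_loop_step_linear) auto
  then show ?thesis
    by (intro ballI allI impI funpow_linear_eq_pow_mat_mult_vec) auto
qed

end
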